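(* Let $R=\mathbb{F}_q+v\mathbb{F}_q+v^2\mathbb{F}_q$ with $v^3=v$, and let $C$ be a linear code of length $n$ over $R$. If $C$ is self-orthogonal (with respect to the Euclidean inner product on $R^n$), then its Gray image $\Psi(C)\subseteq\mathbb{F}_q^{3n}$ is self-orthogonal (with respect to the standard inner product on $\mathbb{F}_q^{3n}$).
   Context: $q$ is a prime power and $R=\mathbb{F}_q[v]/\langle v^3-v\rangle$; every element of $R$ is uniquely $a_0+va_1+v^2a_2$ with $a_i\in\mathbb{F}_q$. A linear code of length $n$ over $R$ is an $R$-submodule of $R^n$. The Euclidean inner product on $R^n$ is $x\cdot y=\sum_{i=0}^{n-1}x_iy_i$; $C^\perp=\{x\in R^n: x\cdot y=0\ \forall y\in C\}$, and $C$ is self-orthogonal if $C\subseteq C^\perp$. Every $c\in R^n$ can be written uniquely as $c=a_0+va_1+v^2a_2$ with $a_0,a_1,a_2\in\mathbb{F}_q^n$, and the Gray map $\Psi:R^n\to\mathbb{F}_q^{3n}$ is $\Psi(c)=(a_0,\ a_0+a_2,\ a_1)$. *)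

theory Defs
  imports Main
begin

text \<open>Elements of R = F_q[v]/(v^3 - v) are represented by their coordinate triples
  (a0,a1,a2) meaning a0 + v a1 + v^2 a2.  F_q is any finite field (type class).\<close>

type_synonym 'a R = "'a \<times> 'a \<times> 'a"

definition radd :: "'a::field R \<Rightarrow> 'a R \<Rightarrow> 'a R" where
  "radd x y = (case x of (a0,a1,a2) \<Rightarrow> case y of (b0,b1,b2) \<Rightarrow> (a0+b0, a1+b1, a2+b2))"

definition rzero :: "'a::field R" where
  "rzero = (0,0,0)"

text \<open>Product of (a0+va1+v^2a2)(b0+vb1+v^2b2), reduced using v^3 = v, v^4 = v^2.\<close>
definition rmul :: "'a::field R \<Rightarrow> 'a R \<Rightarrow> 'a R" where
  "rmul x y = (case x of (a0,a1,a2) \<Rightarrow> case y of (b0,b1,b2) \<Rightarrow>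
     (a0*b0,
      a0*b1 + a1*b0 + a1*b2 + a2*b1,
      a0*b2 + a2*b0 + a1*b1 + a2*b2))"

definition linear_code :: "nat \<Rightarrow> 'a::field R list set \<Rightarrow> bool" where
  "linear_code n C \<longleftrightarrow>
     C \<subseteq> {x. length x = n} \<and>
     replicate n rzero \<in> C \<and>
     (\<forall>x\<in>C. \<forall>y\<in>C. map2 radd x y \<in> C) \<and>
     (\<forall>r. \<forall>x\<in>C. map (rmul r) x \<in> C)"

definition inner_R :: "'a::field R list \<Rightarrow> 'a R list \<Rightarrow> 'a R" where
  "inner_R x y = foldr radd (map2 rmul x y) rzero"

definition dual_R :: "nat \<Rightarrow> 'a::field R list set \<Rightarrow> 'a R list set" where
  "dual_R n C = {x. length x = n \<and> (\<forall>y\<in>C. inner_R x y = rzero)}"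

definition self_orth_R :: "nat \<Rightarrow> 'a::field R list set \<Rightarrow> bool" where
  "self_orth_R n C \<longleftrightarrow> C \<subseteq> dual_R n C"

definition gray :: "'a::field R list \<Rightarrow> 'a list" where
  "gray c = map (\<lambda>(a0,a1,a2). a0) c @ map (\<lambda>(a0,a1,a2). a0 + a2) c @ map (\<lambda>(a0,a1,a2). a1) c"

definition inner_F :: "'a::field list \<Rightarrow> 'a list \<Rightarrow> 'a" where
  "inner_F u w = sum_list (map2 (*) u w)"

definition dual_F :: "nat \<Rightarrow> 'a::field list set \<Rightarrow> 'a list set" where
  "dual_F m D = {x. length x = m \<and> (\<forall>y\<in>D. inner_F x y = 0)}"

definition self_orth_F :: "nat \<Rightarrow> 'a::field list set \<Rightarrow> bool" where
  "self_orth_F m D \<longleftrightarrow> D \<subseteq> dual_F m D"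

end

theory Submission
  imports Defs
begin

text \<open>For single coordinates,
  \<open>a0 b0 + (a0 + a2)(b0 + b2) + a1 b1 = 2 a0 b0 + (a0 b2 + a2 b0 + a1 b1 + a2 b2)\<close>,
  i.e. twice the constant coefficient plus the \<open>v\<^sup>2\<close>-coefficient of the product in \<open>R\<close>.
  Summing over coordinates, the Gray images of two vectors have inner product
  \<open>2 c0 + c2\<close>, where \<open>c0 + v c1 + v\<^sup>2 c2\<close> is their inner product in \<open>R\<^sup>n\<close>;
  so it vanishes whenever the latter does.\<close>

lemma inner_F_append:
  "length u = length u' \<Longrightarrow> inner_F (u @ w) (u' @ w') = inner_F u u' + inner_F w w'"
  by (simp add: inner_F_def)

lemma length_gray: "length (gray x) = 3 * length x"
  by (simp add: gray_def)

lemma inner_R_Cons: "inner_R (a # x) (b # y) = radd (rmul a b) (inner_R x y)"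
  by (simp add: inner_R_def)

lemma inner_F_gray:
  fixes x y :: "'a::field R list"
  assumes "length x = length y"
  shows "inner_F (gray x) (gray y) = 2 * fst (inner_R x y) + snd (snd (inner_R x y))"
  using assms
proof (induction x y rule: list_induct2)
  case Nil
  then show ?case by (simp add: inner_F_def inner_R_def gray_def rzero_def)
next
  case (Cons a x b y)
  obtain a0 a1 a2 where a: "a = (a0, a1, a2)" by (cases a) auto
  obtain b0 b1 b2 where b: "b = (b0, b1, b2)" by (cases b) auto
  have "inner_F (gray (a # x)) (gray (b # y))
      = a0 * b0 + (a0 + a2) * (b0 + b2) + a1 * b1 + inner_F (gray x) (gray y)"
    using Cons.hyps unfolding gray_def
    by (simp add: inner_F_append a b) (simp add: inner_F_def algebra_simps)
  then show ?case unfolding inner_R_Cons Cons.IH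
    by (simp add: a b radd_def rmul_def split: prod.splits) (simp add: algebra_simps)
qed

lemma inner_F_gray_eq_0:
  fixes x y :: "'a::field R list"
  assumes "length x = length y" and "inner_R x y = rzero"
  shows "inner_F (gray x) (gray y) = 0"
  using inner_F_gray[OF assms(1)] assms(2) by (simp add: rzero_def)

theorem theorem3:
  fixes C :: "('a::{field,finite}) R list set" and n :: nat
  assumes "linear_code n C"
    and "self_orth_R n C"
  shows "self_orth_F (3 * n) (gray ` C)"
  unfolding self_orth_F_def
proof
  fix u assume "u \<in> gray ` C"
  then obtain x where x: "x \<in> C" and u: "u = gray x" by blast
  have orth: "length x = n \<and> (\<forall>y\<in>C. inner_R x y = rzero)"
    using assms(2) x by (auto simp: self_orth_R_def dual_R_def)
  have "inner_F (gray x) (gray y) = 0" if y: "y \<in> C" for y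
  proof (rule inner_F_gray_eq_0)
    show "length x = length y"
      using orth assms(2) y by (auto simp: self_orth_R_def dual_R_def)
    show "inner_R x y = rzero" using orth y by blast
  qed
  then show "u \<in> dual_F (3 * n) (gray ` C)"
    using orth u by (auto simp: dual_F_def length_gray)
qed

end
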